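(* Consider the mean-corrected submatrix detection problem with $1/n\le\rho<1/8$. Let $f(Y)=\sum_{i=1}^n\big(\sum_{j=1}^nY_{ij}\big)^2$. Let $t$ satisfy $0<t\le\min\big\{\frac12\sqrt{\rho n},\ \frac{\sqrt2}{18}(\frac18-\rho)\sqrt n\big\}$ and define $\tau=n^2+t\sqrt2\,n^{3/2}$. If $\lambda\ge\sqrt{\frac{4\sqrt2\,t}{1/8-\rho}}\,(\rho\sqrt n)^{-3/2}$, then $\Pr_{Y\sim\mathbb{Q}_n}\{f(Y)<\tau\}\ge1-\frac1{t^2}$ and $\Pr_{Y\sim\mathbb{P}_n}\{f(Y)>\tau\}\ge1-\frac2{t^2}$.
   Context: Mean-corrected submatrix detection problem: the planted distribution $\mathbb{P}_n$ is the law of $Y=\lambda(vv^\top-\mathbb{E}[vv^\top])+Z$, where $v\in\{0,1\}^n$ has i.i.d. $\mathrm{Bernoulli}(\rho)$ entries and $Z$ is an $n\times n$ matrix with i.i.d. $\mathcal{N}(0,1)$ entries (no symmetry), independent of $v$; the null distribution $\mathbb{Q}_n$ is the law of $Y=Z$; $\lambda\ge0$. *)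

theory Defs
  imports "HOL-Probability.Probability"
begin

text \<open>Matrices Y are functions on index pairs (i,j) with i,j < n (0-based indices);
  vectors v are functions on indices i < n with boolean entries (True = 1).\<close>

definition idx :: "nat \<Rightarrow> (nat \<times> nat) set" where
  "idx n = {..<n} \<times> {..<n}"

text \<open>Noise Z: n x n matrix with i.i.d. N(0,1) entries (no symmetry). This is also the null law Q_n.\<close>
definition null_law :: "nat \<Rightarrow> (nat \<times> nat \<Rightarrow> real) measure" where
  "null_law n = PiM (idx n) (\<lambda>_. density lborel std_normal_density)"

definition spike_law :: "nat \<Rightarrow> real \<Rightarrow> (nat \<Rightarrow> bool) measure" where
  "spike_law n \<rho> = PiM {..<n} (\<lambda>_. measure_pmf (bernoulli_pmf \<rho>))"

definition mean_vvT :: "nat \<Rightarrow> real \<Rightarrow> nat \<Rightarrow> nat \<Rightarrow> real" where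
  "mean_vvT n \<rho> i j = (\<integral>v. of_bool (v i) * of_bool (v j) \<partial>spike_law n \<rho>)"

definition planted_law :: "nat \<Rightarrow> real \<Rightarrow> real \<Rightarrow> (nat \<times> nat \<Rightarrow> real) measure" where
  "planted_law n \<rho> lam =
     distr (spike_law n \<rho> \<Otimes>\<^sub>M null_law n) (PiM (idx n) (\<lambda>_. borel))
       (\<lambda>(v, Z). \<lambda>(i,j)\<in>idx n.
          lam * (of_bool (v i) * of_bool (v j) - mean_vvT n \<rho> i j) + Z (i,j))"

definition row_sum_stat :: "nat \<Rightarrow> (nat \<times> nat \<Rightarrow> real) \<Rightarrow> real" where
  "row_sum_stat n Y = (\<Sum>i<n. (\<Sum>j<n. Y (i,j))^2)"

end

theory Submission
  imports Defs
begin

text \<open>Write \<open>R\<^sub>i\<close> for the row sums of the noise; they are independent \<open>N(0, n)\<close>.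
  Given the spike \<open>v\<close>, the planted statistic is \<open>\<Sum>\<^sub>i (a\<^sub>i + R\<^sub>i)\<^sup>2\<close> with deterministic offsets
  \<open>a\<^sub>i\<close>, whose mean is \<open>n\<^sup>2 + \<Sum> a\<^sub>i\<^sup>2\<close> and variance \<open>2n\<^sup>3 + 4n \<Sum> a\<^sub>i\<^sup>2\<close>; the null law is the case
  \<open>a = 0\<close>, so Chebyshev's inequality gives the null bound. Under the planted law, Chebyshev's
  inequality for the support size \<open>K\<close> of \<open>v\<close> shows \<open>K \<ge> n\<rho>/2\<close> outside an event of probability
  \<open>1/t\<^sup>2\<close>; then every row in the support has offset \<open>\<lambda>(K - \<rho> - (n-1)\<rho>\<^sup>2)\<close>, which forces
  \<open>\<Sum> a\<^sub>i\<^sup>2\<close> to be at least three times the excess \<open>\<tau> - n\<^sup>2\<close>, and a second application of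
  Chebyshev's inequality, conditionally on \<open>v\<close>, bounds the lower tail by another \<open>1/t\<^sup>2\<close>.\<close>

section \<open>Independent sums and Chebyshev's inequality\<close>

lemma indep_vars_PiM_components:
  assumes "\<And>i. i \<in> I \<Longrightarrow> prob_space (M i)"
  shows "prob_space.indep_vars (PiM I M) M (\<lambda>i x. x i) I"
proof -
  interpret P: prob_space "PiM I M" using assms by (rule prob_space_PiM)
  show ?thesis
  proof (cases "I = {}")
    case True
    then show ?thesis unfolding P.indep_vars_def P.indep_sets_def by auto
  next
    case False
    have "distr (PiM I M) (PiM I M) (\<lambda>x. \<lambda>i\<in>I. x i) = PiM I M"
      by (subst distr_cong[of _ _ _ _ _ "\<lambda>x. x"]) (auto simp: space_PiM)
    also have "\<dots> = PiM I (\<lambda>i. distr (PiM I M) (M i) (\<lambda>x. x i))"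
      using assms by (intro PiM_cong refl distr_PiM_component[symmetric])
    finally show ?thesis
      using False by (subst P.indep_vars_iff_distr_eq_PiM') auto
  qed
qed

lemma (in prob_space) variance_sum_indep:
  fixes X :: "'i \<Rightarrow> 'a \<Rightarrow> real"
  assumes "finite I" and indep: "indep_vars (\<lambda>_. borel) X I"
    and sq: "\<And>i. i \<in> I \<Longrightarrow> integrable M (\<lambda>x. (X i x)\<^sup>2)"
  shows "integrable M (\<lambda>x. (\<Sum>i\<in>I. X i x)\<^sup>2)"
    and "variance (\<lambda>x. \<Sum>i\<in>I. X i x) = (\<Sum>i\<in>I. variance (X i))"
proof -
  have rv: "random_variable borel (X i)" if "i \<in> I" for i
    using indep that by (simp add: indep_vars_def)
  have int: "integrable M (X i)" if "i \<in> I" for i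
    using square_integrable_imp_integrable[OF rv[OF that] sq[OF that]] .
  have "integrable M (\<lambda>x. (\<Sum>i\<in>J. X i x)\<^sup>2) \<and>
        variance (\<lambda>x. \<Sum>i\<in>J. X i x) = (\<Sum>i\<in>J. variance (X i))" if "J \<subseteq> I" for J
    using finite_subset[OF that \<open>finite I\<close>] that
  proof (induction J)
    case empty
    then show ?case by simp
  next
    case (insert j J)
    let ?S = "\<lambda>x. \<Sum>i\<in>J. X i x"
    have j: "j \<in> I" and J: "J \<subseteq> I" using insert.prems by auto
    have IH: "integrable M (\<lambda>x. (?S x)\<^sup>2)" "variance ?S = (\<Sum>i\<in>J. variance (X i))"
      using insert.IH J by auto
    have ind: "indep_var borel (X j) borel ?S"
      using insert.hyps j J by (intro indep_vars_sum indep_vars_subset[OF indep]) auto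
    have intS: "integrable M ?S" using int J by auto
    have prod: "integrable M (\<lambda>x. X j x * ?S x)"
      by (rule indep_var_integrable[OF ind int[OF j] intS])
    have E: "expectation (\<lambda>x. X j x * ?S x) = expectation (X j) * expectation ?S"
      by (rule indep_var_lebesgue_integral[OF ind int[OF j] intS])
    have sq_sum: "(\<lambda>x. (\<Sum>i\<in>insert j J. X i x)\<^sup>2) = (\<lambda>x. (X j x)\<^sup>2 + 2 * (X j x * ?S x) + (?S x)\<^sup>2)"
      using insert.hyps by (simp add: power2_sum algebra_simps)
    have int2: "integrable M (\<lambda>x. (\<Sum>i\<in>insert j J. X i x)\<^sup>2)"
      unfolding sq_sum using sq[OF j] prod IH(1) by auto
    have "variance (\<lambda>x. \<Sum>i\<in>insert j J. X i x)
        = expectation (\<lambda>x. (\<Sum>i\<in>insert j J. X i x)\<^sup>2) - (expectation (\<lambda>x. \<Sum>i\<in>insert j J. X i x))\<^sup>2"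
      using int2 int j intS insert.hyps by (intro variance_eq) auto
    also have "\<dots> = (expectation (\<lambda>x. (X j x)\<^sup>2) - (expectation (X j))\<^sup>2)
        + (expectation (\<lambda>x. (?S x)\<^sup>2) - (expectation ?S)\<^sup>2)"
      unfolding sq_sum using insert.hyps sq[OF j] prod IH(1) int[OF j] intS E
      by (simp add: power2_sum)
    also have "\<dots> = variance (X j) + variance ?S"
      using sq[OF j] int[OF j] intS IH(1) by (simp add: variance_eq)
    finally show ?case using int2 IH(2) insert.hyps by simp
  qed
  then show "integrable M (\<lambda>x. (\<Sum>i\<in>I. X i x)\<^sup>2)"
    and "variance (\<lambda>x. \<Sum>i\<in>I. X i x) = (\<Sum>i\<in>I. variance (X i))" by auto
qed

lemma (in prob_space) Chebyshev_tails:
  fixes f :: "'a \<Rightarrow> real"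
  assumes [measurable]: "random_variable borel f"
    and "integrable M (\<lambda>x. (f x)\<^sup>2)" and "expectation f = \<mu>" and "a > 0"
  shows "prob {x \<in> space M. f x \<le> \<mu> - a} \<le> variance f / a\<^sup>2"
    and "prob {x \<in> space M. f x < \<mu> + a} \<ge> 1 - variance f / a\<^sup>2"
proof -
  let ?B = "{x \<in> space M. \<bar>f x - \<mu>\<bar> \<ge> a}"
  have cheb: "prob ?B \<le> variance f / a\<^sup>2"
    using Chebyshev_inequality[of f a] assms by simp
  have "prob {x \<in> space M. f x \<le> \<mu> - a} \<le> prob ?B"
    by (rule finite_measure_mono) auto
  then show "prob {x \<in> space M. f x \<le> \<mu> - a} \<le> variance f / a\<^sup>2"
    using cheb by linarith
  have "prob (space M - ?B) \<le> prob {x \<in> space M. f x < \<mu> + a}"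
    by (rule finite_measure_mono) auto
  moreover have "prob (space M - ?B) = 1 - prob ?B" by (rule prob_compl) measurable
  ultimately show "prob {x \<in> space M. f x < \<mu> + a} \<ge> 1 - variance f / a\<^sup>2"
    using cheb by linarith
qed

section \<open>Gaussian moments\<close>

lemma (in prob_space) normal_shifted_square_moments:
  fixes X :: "'a \<Rightarrow> real"
  assumes D: "distributed M lborel X (normal_density 0 \<sigma>)" and \<sigma>: "0 < \<sigma>"
  shows "integrable M (\<lambda>x. (a + X x)\<^sup>2)"
    and "integrable M (\<lambda>x. ((a + X x)\<^sup>2)\<^sup>2)"
    and "expectation (\<lambda>x. (a + X x)\<^sup>2) = a\<^sup>2 + \<sigma>\<^sup>2"
    and "variance (\<lambda>x. (a + X x)\<^sup>2) = 4 * a\<^sup>2 * \<sigma>\<^sup>2 + 2 * \<sigma>^4"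
proof -
  have int: "integrable M (\<lambda>x. X x ^ k)" for k
    using distributed_integrable[OF D, of "\<lambda>y. y ^ k"] integrable_normal_moment[OF \<sigma>, of 0 k] by simp
  have mom: "expectation (\<lambda>x. X x ^ k) = (\<integral>y. normal_density 0 \<sigma> y * y ^ k \<partial>lborel)" for k
    using distributed_integral[OF D, of "\<lambda>y. y ^ k"] by simp
  have int1: "integrable M X" using int[of 1] by simp
  have m1: "expectation X = 0"
    using mom[of 1] integral_normal_moment_odd[OF \<sigma>, of 0 0] by simp
  have m3: "expectation (\<lambda>x. X x ^ 3) = 0"
    using mom[of 3] integral_normal_moment_odd[OF \<sigma>, of 0 1] by simp
  have m2: "expectation (\<lambda>x. X x ^ 2) = \<sigma>\<^sup>2"
    using mom[of 2] integral_normal_moment_even[OF \<sigma>, of 0 1] by simp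
  have m4: "expectation (\<lambda>x. X x ^ 4) = 3 * \<sigma>^4"
    using mom[of 4] integral_normal_moment_even[OF \<sigma>, of 0 2]
    by (simp add: fact_numeral power2_eq_square eval_nat_numeral field_simps)
  have sq: "(\<lambda>x. (a + X x)\<^sup>2) = (\<lambda>x. a\<^sup>2 + 2 * a * X x + X x ^ 2)"
    by (simp add: fun_eq_iff power2_eq_square algebra_simps)
  have quart: "(\<lambda>x. ((a + X x)\<^sup>2)\<^sup>2) = (\<lambda>x. a ^ 4 + 4 * a ^ 3 * X x + 6 * a\<^sup>2 * X x ^ 2
      + 4 * a * X x ^ 3 + X x ^ 4)"
    by (simp add: fun_eq_iff power2_eq_square eval_nat_numeral algebra_simps)
  show int4: "integrable M (\<lambda>x. ((a + X x)\<^sup>2)\<^sup>2)"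
    unfolding quart using int int1 by auto
  show int2: "integrable M (\<lambda>x. (a + X x)\<^sup>2)"
    unfolding sq using int int1 by auto
  show E2: "expectation (\<lambda>x. (a + X x)\<^sup>2) = a\<^sup>2 + \<sigma>\<^sup>2"
    unfolding sq using int int1 m1 m2 by (simp add: prob_space)
  have E4: "expectation (\<lambda>x. ((a + X x)\<^sup>2)\<^sup>2) = a ^ 4 + 6 * a\<^sup>2 * \<sigma>\<^sup>2 + 3 * \<sigma>^4"
    unfolding quart using int int1 m1 m2 m3 m4 by (simp add: prob_space)
  have "variance (\<lambda>x. (a + X x)\<^sup>2)
      = expectation (\<lambda>x. ((a + X x)\<^sup>2)\<^sup>2) - (expectation (\<lambda>x. (a + X x)\<^sup>2))\<^sup>2"
    by (rule variance_eq[OF int2 int4])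
  also have "\<dots> = 4 * a\<^sup>2 * \<sigma>\<^sup>2 + 2 * \<sigma>^4"
    unfolding E2 E4 by (simp add: power2_eq_square eval_nat_numeral algebra_simps)
  finally show "variance (\<lambda>x. (a + X x)\<^sup>2) = 4 * a\<^sup>2 * \<sigma>\<^sup>2 + 2 * \<sigma>^4" .
qed

section \<open>The null law\<close>

lemma prob_space_null_law: "prob_space (null_law n)"
  unfolding null_law_def by (intro prob_space_PiM prob_space_normal_density) simp

lemma null_law_entries_indep:
  "prob_space.indep_vars (null_law n) (\<lambda>_. borel) (\<lambda>p Z. Z p) (idx n)"
proof -
  have "prob_space.indep_vars (null_law n) (\<lambda>_. density lborel std_normal_density) (\<lambda>p Z. Z p) (idx n)"
    unfolding null_law_def by (intro indep_vars_PiM_components prob_space_normal_density) simp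
  then show ?thesis
    by (rule prob_space.indep_vars_compose2[OF prob_space_null_law, where Y="\<lambda>_ x. x"]) simp
qed

lemma null_law_entry_distributed:
  assumes "p \<in> idx n"
  shows "distributed (null_law n) lborel (\<lambda>Z. Z p) std_normal_density"
proof -
  have "distr (null_law n) lborel (\<lambda>Z. Z p)
      = distr (null_law n) (density lborel std_normal_density) (\<lambda>Z. Z p)"
    by (rule distr_cong) auto
  also have "\<dots> = density lborel std_normal_density"
    unfolding null_law_def using assms by (intro distr_PiM_component prob_space_normal_density) simp_all
  finally show ?thesis
    unfolding distributed_def using assms by (auto simp: null_law_def)
qed

lemma null_law_row_sums_indep:
  "prob_space.indep_vars (null_law n) (\<lambda>_. borel) (\<lambda>i Z. \<Sum>j<n. Z (i,j)) {..<n}"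
proof -
  interpret prob_space "null_law n" by (rule prob_space_null_law)
  have "indep_vars (\<lambda>i. PiM ({i} \<times> {..<n}) (\<lambda>_. borel)) (\<lambda>i Z. restrict Z ({i} \<times> {..<n})) {..<n}"
    by (rule indep_vars_restrict[OF null_law_entries_indep]) (auto simp: idx_def disjoint_family_on_def)
  then have "indep_vars (\<lambda>_. borel) (\<lambda>i Z. \<Sum>j<n. restrict Z ({i} \<times> {..<n}) (i,j)) {..<n}"
    by (rule indep_vars_compose2) measurable
  then show ?thesis by simp
qed

lemma null_law_row_sum_distributed:
  assumes "i < n"
  shows "distributed (null_law n) lborel (\<lambda>Z. \<Sum>j<n. Z (i,j)) (normal_density 0 (sqrt (real n)))"
proof -
  interpret prob_space "null_law n" by (rule prob_space_null_law)
  have row: "(\<Sum>p\<in>{i} \<times> {..<n}. Z p) = (\<Sum>j<n. Z (i,j))" for Z :: "nat \<times> nat \<Rightarrow> real"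
  proof -
    have "{i} \<times> {..<n} = Pair i ` {..<n}" by auto
    then show ?thesis by (simp add: sum.reindex inj_on_def)
  qed
  have "distributed (null_law n) lborel (\<lambda>Z. \<Sum>p\<in>{i} \<times> {..<n}. Z p)
      (normal_density (\<Sum>p\<in>{i} \<times> {..<n}. 0) (sqrt (\<Sum>p\<in>{i} \<times> {..<n}. 1\<^sup>2)))"
    using assms
    by (intro sum_indep_normal indep_vars_subset[OF null_law_entries_indep] null_law_entry_distributed)
       (auto simp: idx_def)
  then show ?thesis by (simp add: row)
qed

definition offset_row_sum_stat :: "nat \<Rightarrow> (nat \<Rightarrow> real) \<Rightarrow> (nat \<times> nat \<Rightarrow> real) \<Rightarrow> real" where
  "offset_row_sum_stat n a Z = (\<Sum>i<n. (a i + (\<Sum>j<n. Z (i,j)))\<^sup>2)"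

lemma null_law_offset_row_sum_stat_moments:
  fixes a :: "nat \<Rightarrow> real"
  shows "integrable (null_law n) (\<lambda>Z. (offset_row_sum_stat n a Z)\<^sup>2)"
    and "prob_space.expectation (null_law n) (offset_row_sum_stat n a) = real n ^ 2 + (\<Sum>i<n. (a i)\<^sup>2)"
    and "prob_space.variance (null_law n) (offset_row_sum_stat n a)
           = 2 * real n ^ 3 + 4 * real n * (\<Sum>i<n. (a i)\<^sup>2)"
proof -
  interpret prob_space "null_law n" by (rule prob_space_null_law)
  define X where "X i Z = (a i + (\<Sum>j<n. Z (i,j)))\<^sup>2" for i Z
  have stat: "offset_row_sum_stat n a = (\<lambda>Z. \<Sum>i<n. X i Z)"
    by (simp add: fun_eq_iff offset_row_sum_stat_def X_def)
  note row = normal_shifted_square_moments[OF null_law_row_sum_distributed, simplified]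
  have ind: "indep_vars (\<lambda>_. borel) X {..<n}"
    unfolding X_def
    by (rule indep_vars_compose2[OF null_law_row_sums_indep, where Y="\<lambda>i x. (a i + x)\<^sup>2"]) simp
  have sq: "integrable (null_law n) (\<lambda>Z. (X i Z)\<^sup>2)" if "i < n" for i
    unfolding X_def using row(2)[OF that] that by simp
  show "integrable (null_law n) (\<lambda>Z. (offset_row_sum_stat n a Z)\<^sup>2)"
    unfolding stat by (rule variance_sum_indep(1)[OF _ ind sq]) auto
  show "expectation (offset_row_sum_stat n a) = real n ^ 2 + (\<Sum>i<n. (a i)\<^sup>2)"
    unfolding stat X_def using row(1,3) by (simp add: sum.distrib power2_eq_square)
  have "variance (offset_row_sum_stat n a) = (\<Sum>i<n. 4 * (a i)\<^sup>2 * real n + 2 * (real n)\<^sup>2)"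
    unfolding stat variance_sum_indep(2)[OF _ ind sq, simplified] unfolding X_def
    using row(4) power_mult[of "sqrt (real n)" 2 2] by simp
  also have "\<dots> = 2 * real n ^ 3 + 4 * real n * (\<Sum>i<n. (a i)\<^sup>2)"
    by (simp add: sum.distrib sum_distrib_left power2_eq_square power3_eq_cube algebra_simps)
  finally show "variance (offset_row_sum_stat n a) = 2 * real n ^ 3 + 4 * real n * (\<Sum>i<n. (a i)\<^sup>2)" .
qed

lemma null_law_offset_row_sum_stat_tails:
  fixes n :: nat and a :: "nat \<Rightarrow> real" and \<tau> :: real
  defines "\<mu> \<equiv> real n ^ 2 + (\<Sum>i<n. (a i)\<^sup>2)"
    and "V \<equiv> 2 * real n ^ 3 + 4 * real n * (\<Sum>i<n. (a i)\<^sup>2)"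
  shows "\<tau> < \<mu> \<Longrightarrow>
      measure (null_law n) {Z \<in> space (null_law n). offset_row_sum_stat n a Z \<le> \<tau>} \<le> V / (\<mu> - \<tau>)\<^sup>2"
    and "\<mu> < \<tau> \<Longrightarrow>
      measure (null_law n) {Z \<in> space (null_law n). offset_row_sum_stat n a Z < \<tau>} \<ge> 1 - V / (\<tau> - \<mu>)\<^sup>2"
proof -
  interpret prob_space "null_law n" by (rule prob_space_null_law)
  have "random_variable borel (offset_row_sum_stat n a)"
    unfolding offset_row_sum_stat_def null_law_def by measurable (auto simp: idx_def)
  note tails = Chebyshev_tails[OF this null_law_offset_row_sum_stat_moments(1,2)]
  note var = null_law_offset_row_sum_stat_moments(3)
  show "measure (null_law n) {Z \<in> space (null_law n). offset_row_sum_stat n a Z \<le> \<tau>} \<le> V / (\<mu> - \<tau>)\<^sup>2"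
    if "\<tau> < \<mu>"
    using tails(1)[of "\<mu> - \<tau>"] that unfolding var \<mu>_def V_def by simp
  show "measure (null_law n) {Z \<in> space (null_law n). offset_row_sum_stat n a Z < \<tau>} \<ge> 1 - V / (\<tau> - \<mu>)\<^sup>2"
    if "\<mu> < \<tau>"
    using tails(2)[of "\<tau> - \<mu>"] that unfolding var \<mu>_def V_def by simp
qed

section \<open>The spike law\<close>

lemma prob_space_spike_law: "prob_space (spike_law n \<rho>)"
  unfolding spike_law_def by (intro prob_space_PiM prob_space_measure_pmf)

lemma spike_law_coordinates_indep:
  "prob_space.indep_vars (spike_law n \<rho>) (\<lambda>_. borel) (\<lambda>j v. of_bool (v j) :: real) {..<n}"
proof -
  have "prob_space.indep_vars (spike_law n \<rho>) (\<lambda>_. measure_pmf (bernoulli_pmf \<rho>)) (\<lambda>j v. v j) {..<n}"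
    unfolding spike_law_def by (intro indep_vars_PiM_components prob_space_measure_pmf)
  then show ?thesis
    by (rule prob_space.indep_vars_compose2[OF prob_space_spike_law, where Y="\<lambda>_ b. of_bool b"]) simp
qed

lemma spike_law_coordinate_expectation:
  assumes "0 \<le> \<rho>" "\<rho> \<le> 1" and "j < n"
  shows "(\<integral>v. of_bool (v j) \<partial>spike_law n \<rho>) = \<rho>"
proof -
  have m: "(\<lambda>v. v j) \<in> measurable (spike_law n \<rho>) (measure_pmf (bernoulli_pmf \<rho>))"
    unfolding spike_law_def using assms(3) by (intro measurable_component_singleton) auto
  have "(\<integral>v. of_bool (v j) \<partial>spike_law n \<rho>)
      = (\<integral>b. (of_bool b :: real) \<partial>distr (spike_law n \<rho>) (measure_pmf (bernoulli_pmf \<rho>)) (\<lambda>v. v j))"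
    using integral_distr[OF m, of "of_bool :: bool \<Rightarrow> real"] by simp
  also have "\<dots> = (\<integral>b. of_bool b \<partial>measure_pmf (bernoulli_pmf \<rho>))"
    unfolding spike_law_def using assms(3) by (subst distr_PiM_component) (auto intro: prob_space_measure_pmf)
  finally show ?thesis using assms by simp
qed

lemma mean_vvT_eq:
  assumes \<rho>: "0 \<le> \<rho>" "\<rho> \<le> 1" and "i < n" "j < n"
  shows "mean_vvT n \<rho> i j = (if i = j then \<rho> else \<rho>\<^sup>2)"
proof (cases "i = j")
  case True
  have "(\<lambda>v. of_bool (v j) * of_bool (v j) :: real) = (\<lambda>v. of_bool (v j))"
    by (simp add: fun_eq_iff)
  then show ?thesis
    using True spike_law_coordinate_expectation[OF \<rho> \<open>j < n\<close>] by (simp add: mean_vvT_def)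
next
  case False
  interpret prob_space "spike_law n \<rho>" by (rule prob_space_spike_law)
  have "indep_var borel (\<lambda>v. of_bool (v i) :: real) borel (\<lambda>v. \<Sum>k\<in>{j}. of_bool (v k))"
    using False assms by (intro indep_vars_sum indep_vars_subset[OF spike_law_coordinates_indep]) auto
  then have "indep_var borel (\<lambda>v. of_bool (v i) :: real) borel (\<lambda>v. of_bool (v j))"
    by (simp only: sum.insert sum.empty finite.emptyI empty_iff not_False_eq_True add_0_right)
  moreover have "integrable (spike_law n \<rho>) (\<lambda>v. of_bool (v k) :: real)" if "k < n" for k
    using spike_law_coordinates_indep[of n \<rho>] that unfolding indep_vars_def
    by (intro integrable_const_bound[where B=1]) auto
  ultimately show ?thesis
    using False assms spike_law_coordinate_expectation[OF \<rho>]
    by (simp add: mean_vvT_def indep_var_lebesgue_integral power2_eq_square)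
qed

lemma row_sum_mean_vvT:
  assumes "0 \<le> \<rho>" "\<rho> \<le> 1" and "i < n"
  shows "(\<Sum>j<n. mean_vvT n \<rho> i j) = \<rho> + (real n - 1) * \<rho>\<^sup>2"
proof -
  have "(\<Sum>j<n. mean_vvT n \<rho> i j) = (\<Sum>j<n. \<rho>\<^sup>2 + (if i = j then \<rho> - \<rho>\<^sup>2 else 0))"
    by (intro sum.cong refl) (use mean_vvT_eq[OF assms] in auto)
  also have "\<dots> = real n * \<rho>\<^sup>2 + (\<rho> - \<rho>\<^sup>2)" using assms(3) by (simp add: sum.distrib)
  finally show ?thesis by (simp add: algebra_simps)
qed

lemma spike_count_deviation:
  assumes \<rho>: "0 \<le> \<rho>" "\<rho> \<le> 1" and "d > 0"
  shows "measure (spike_law n \<rho>) {v \<in> space (spike_law n \<rho>). d \<le> \<bar>(\<Sum>j<n. of_bool (v j)) - real n * \<rho>\<bar>}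
     \<le> real n * \<rho> * (1 - \<rho>) / d\<^sup>2"
proof -
  interpret prob_space "spike_law n \<rho>" by (rule prob_space_spike_law)
  let ?X = "\<lambda>j v. of_bool (v j) :: real"
  have rv: "random_variable borel (?X j)" if "j < n" for j
    using spike_law_coordinates_indep[of n \<rho>] that unfolding indep_vars_def by auto
  have sq: "integrable (spike_law n \<rho>) (\<lambda>v. (?X j v)\<^sup>2)" if "j < n" for j
    using rv[OF that] by (intro integrable_const_bound[where B=1]) auto
  have idem: "(?X j v)\<^sup>2 = ?X j v" for j v by simp
  have E: "expectation (?X j) = \<rho>" and E2: "expectation (\<lambda>v. (?X j v)\<^sup>2) = \<rho>" if "j < n" for j
    using spike_law_coordinate_expectation[OF \<rho> that] by (simp_all only: idem)
  have int: "integrable (spike_law n \<rho>) (?X j)" if "j < n" for j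
    using sq[OF that] by (simp only: idem)
  note sum = variance_sum_indep[OF _ spike_law_coordinates_indep sq]
  have "expectation (\<lambda>v. \<Sum>j<n. ?X j v) = real n * \<rho>"
    using int E by (simp del: sum_of_bool_eq)
  moreover have "variance (?X j) = \<rho> * (1 - \<rho>)" if "j < n" for j
  proof -
    have "variance (?X j) = expectation (\<lambda>v. (?X j v)\<^sup>2) - (expectation (?X j))\<^sup>2"
      by (rule variance_eq[OF int[OF that] sq[OF that]])
    also have "\<dots> = \<rho> * (1 - \<rho>)"
      unfolding E[OF that] E2[OF that] by (simp add: power2_eq_square algebra_simps)
    finally show ?thesis .
  qed
  then have "variance (\<lambda>v. \<Sum>j<n. ?X j v) = real n * \<rho> * (1 - \<rho>)"
    using sum(2) by (simp del: sum_of_bool_eq)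
  ultimately show ?thesis
    using Chebyshev_inequality[of "\<lambda>v. \<Sum>j<n. ?X j v" d] sum(1) rv assms(3) by (simp del: sum_of_bool_eq)
qed

section \<open>The planted law\<close>

definition planted_map ::
    "nat \<Rightarrow> real \<Rightarrow> real \<Rightarrow> (nat \<Rightarrow> bool) \<times> (nat \<times> nat \<Rightarrow> real) \<Rightarrow> (nat \<times> nat \<Rightarrow> real)" where
  "planted_map n \<rho> lam = (\<lambda>(v, Z). \<lambda>(i,j)\<in>idx n.
     lam * (of_bool (v i) * of_bool (v j) - mean_vvT n \<rho> i j) + Z (i,j))"

definition planted_row_offset :: "nat \<Rightarrow> real \<Rightarrow> real \<Rightarrow> (nat \<Rightarrow> bool) \<Rightarrow> nat \<Rightarrow> real" where
  "planted_row_offset n \<rho> lam v i = lam * (\<Sum>j<n. of_bool (v i) * of_bool (v j) - mean_vvT n \<rho> i j)"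

lemma planted_law_eq_distr:
  "planted_law n \<rho> lam = distr (spike_law n \<rho> \<Otimes>\<^sub>M null_law n) (PiM (idx n) (\<lambda>_. borel)) (planted_map n \<rho> lam)"
  unfolding planted_law_def planted_map_def ..

lemma row_sum_stat_planted_map:
  "row_sum_stat n (planted_map n \<rho> lam (v, Z)) = offset_row_sum_stat n (planted_row_offset n \<rho> lam v) Z"
proof -
  have "(\<Sum>j<n. planted_map n \<rho> lam (v, Z) (i,j)) = planted_row_offset n \<rho> lam v i + (\<Sum>j<n. Z (i,j))"
    if "i < n" for i
    using that
    by (simp add: planted_map_def planted_row_offset_def idx_def sum.distrib sum_distrib_left
        sum_subtractf algebra_simps)
  then show ?thesis
    unfolding row_sum_stat_def offset_row_sum_stat_def by (intro sum.cong refl) simp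
qed

lemma spike_law_coordinate_measurable:
  "k < n \<Longrightarrow> (\<lambda>v. v k) \<in> measurable (spike_law n \<rho>) (count_space UNIV)"
  unfolding spike_law_def
  using measurable_component_singleton[of k "{..<n}" "\<lambda>_. measure_pmf (bernoulli_pmf \<rho>)"]
  by (simp cong: measurable_cong_sets)

lemma null_law_entry_measurable:
  "i < n \<Longrightarrow> j < n \<Longrightarrow> (\<lambda>Z. Z (i,j)) \<in> borel_measurable (null_law n)"
  using null_law_entry_distributed[of "(i,j)" n] by (simp add: idx_def distributed_def)

lemma pair_coordinates_measurable[measurable]:
  "k < n \<Longrightarrow> (\<lambda>x. fst x k) \<in> measurable (spike_law n \<rho> \<Otimes>\<^sub>M N) (count_space UNIV)"
  "i < n \<Longrightarrow> j < n \<Longrightarrow> (\<lambda>x. snd x (i,j)) \<in> borel_measurable (M \<Otimes>\<^sub>M null_law n)"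
  by (rule measurable_compose[OF measurable_fst spike_law_coordinate_measurable], assumption)
     (rule measurable_compose[OF measurable_snd null_law_entry_measurable], assumption+)

lemma planted_map_measurable:
  "planted_map n \<rho> lam \<in> measurable (spike_law n \<rho> \<Otimes>\<^sub>M null_law n) (PiM (idx n) (\<lambda>_. borel))"
proof -
  have "planted_map n \<rho> lam = (\<lambda>x. \<lambda>p\<in>idx n. lam * (of_bool (fst x (fst p)) * of_bool (fst x (snd p))
      - mean_vvT n \<rho> (fst p) (snd p)) + snd x (fst p, snd p))"
    by (auto simp: planted_map_def fun_eq_iff split: prod.splits)
  also have "\<dots> \<in> measurable (spike_law n \<rho> \<Otimes>\<^sub>M null_law n) (PiM (idx n) (\<lambda>_. borel))"
    by (rule measurable_restrict) (auto simp: idx_def)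
  finally show ?thesis .
qed

lemma planted_law_upper_tail:
  assumes "e \<ge> 0"
    and bad: "B \<in> sets (spike_law n \<rho>)" "measure (spike_law n \<rho>) B \<le> e'"
    and good: "\<And>v. v \<in> space (spike_law n \<rho>) \<Longrightarrow> v \<notin> B \<Longrightarrow>
        measure (null_law n) {Z \<in> space (null_law n). offset_row_sum_stat n (planted_row_offset n \<rho> lam v) Z \<le> \<tau>} \<le> e"
  shows "measure (planted_law n \<rho> lam) {Y \<in> space (planted_law n \<rho> lam). row_sum_stat n Y > \<tau>}
      \<ge> 1 - (e' + e)"
proof -
  interpret S: prob_space "spike_law n \<rho>" by (rule prob_space_spike_law)
  interpret N: prob_space "null_law n" by (rule prob_space_null_law)
  interpret SN: pair_prob_space "spike_law n \<rho>" "null_law n" ..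
  let ?M = "spike_law n \<rho> \<Otimes>\<^sub>M null_law n"
  define L where "L = {x \<in> space ?M. offset_row_sum_stat n (planted_row_offset n \<rho> lam (fst x)) (snd x) \<le> \<tau>}"
  have L: "L \<in> sets ?M"
    unfolding L_def offset_row_sum_stat_def planted_row_offset_def by measurable
  have "row_sum_stat n \<in> borel_measurable (PiM (idx n) (\<lambda>_. borel))"
    unfolding row_sum_stat_def by measurable (auto simp: idx_def)
  then have "measure (planted_law n \<rho> lam) {Y \<in> space (planted_law n \<rho> lam). row_sum_stat n Y > \<tau>}
      = measure ?M (space ?M - L)"
    unfolding planted_law_eq_distr
    using measurable_space[OF planted_map_measurable]
    by (subst measure_distr[OF planted_map_measurable])
       (auto simp: L_def row_sum_stat_planted_map[symmetric] not_le intro!: arg_cong[where f="measure ?M"])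
  also have "\<dots> = 1 - measure ?M L" by (rule SN.prob_compl[OF L])
  finally have planted: "measure (planted_law n \<rho> lam) {Y \<in> space (planted_law n \<rho> lam). row_sum_stat n Y > \<tau>}
      = 1 - measure ?M L" .
  have slice: "emeasure (null_law n) (Pair v -` L) \<le> indicator B v + ennreal e"
    if v: "v \<in> space (spike_law n \<rho>)" for v
  proof (cases "v \<in> B")
    case True
    then show ?thesis using N.emeasure_le_1[of "Pair v -` L"] by (simp add: add_increasing2)
  next
    case False
    have "Pair v -` L = {Z \<in> space (null_law n). offset_row_sum_stat n (planted_row_offset n \<rho> lam v) Z \<le> \<tau>}"
      using v unfolding L_def by (auto simp: space_pair_measure)
    then show ?thesis
      using good[OF v False] False by (simp add: N.emeasure_eq_measure ennreal_leI)
  qed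
  have "emeasure ?M L = (\<integral>\<^sup>+v. emeasure (null_law n) (Pair v -` L) \<partial>spike_law n \<rho>)"
    by (rule N.emeasure_pair_measure_alt[OF L])
  also have "\<dots> \<le> (\<integral>\<^sup>+v. (indicator B v + ennreal e) \<partial>spike_law n \<rho>)"
    by (intro nn_integral_mono slice)
  also have "\<dots> = ennreal (measure (spike_law n \<rho>) B + e)"
    using bad(1) \<open>e \<ge> 0\<close> by (simp add: nn_integral_add S.emeasure_eq_measure S.prob_space ennreal_plus)
  finally have "measure ?M L \<le> measure (spike_law n \<rho>) B + e"
    using \<open>e \<ge> 0\<close> by (simp add: SN.emeasure_eq_measure ennreal_plus[symmetric] del: ennreal_plus)
  then show ?thesis using planted bad(2) by linarith
qed

lemma planted_row_offset_energy:
  fixes n :: nat and v :: "nat \<Rightarrow> bool" and \<rho> lam :: real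
  assumes "0 \<le> \<rho>" "\<rho> \<le> 1"
  defines "K \<equiv> (\<Sum>j<n. of_bool (v j) :: real)"
  shows "(\<Sum>i<n. (planted_row_offset n \<rho> lam v i)\<^sup>2) \<ge> K * (lam * (K - (\<rho> + (real n - 1) * \<rho>\<^sup>2)))\<^sup>2"
proof -
  let ?c = "\<rho> + (real n - 1) * \<rho>\<^sup>2"
  have "of_bool (v i) * (lam * (K - ?c))\<^sup>2 \<le> (planted_row_offset n \<rho> lam v i)\<^sup>2" if "i < n" for i
  proof (cases "v i")
    case True
    then have "planted_row_offset n \<rho> lam v i = lam * (K - (\<Sum>j<n. mean_vvT n \<rho> i j))"
      by (simp add: planted_row_offset_def K_def sum_subtractf del: sum_of_bool_eq)
    then show ?thesis using True row_sum_mean_vvT[OF assms(1,2) that] by simp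
  qed simp
  then have "(\<Sum>i<n. of_bool (v i) * (lam * (K - ?c))\<^sup>2) \<le> (\<Sum>i<n. (planted_row_offset n \<rho> lam v i)\<^sup>2)"
    by (intro sum_mono) simp
  then show ?thesis unfolding K_def by (simp only: sum_distrib_right)
qed

lemma support_energy_lower:
  fixes N \<rho> K :: real
  assumes N: "N \<ge> 24" and \<rho>: "0 < \<rho>" "\<rho> < 1/8" and K: "K \<ge> N * \<rho> / 2"
  shows "K * (K - (\<rho> + (N - 1) * \<rho>\<^sup>2))\<^sup>2 \<ge> (3/4) * (1/8 - \<rho>) * \<rho>^3 * N^3"
proof -
  define U where "U = 1/2 - \<rho> - 1/N"
  have N0: "N > 0" using N by simp
  have iN: "0 < 1/N" "1/N \<le> 1/24" using N by (auto simp: field_simps)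
  then have U: "0 \<le> U" "U \<le> 1/2" using \<rho> unfolding U_def by linarith+
  have NU: "N * U = N/2 - N * \<rho> - 1" using N0 unfolding U_def by (simp add: algebra_simps)
  have gap: "K - (\<rho> + (N - 1) * \<rho>\<^sup>2) \<ge> \<rho> * (N * U)"
    using K mult_pos_pos[OF \<rho>(1) \<rho>(1)] unfolding NU by (simp add: power2_eq_square algebra_simps)
  have "(3/4 - U)\<^sup>2 \<ge> (1/4)\<^sup>2" using U by (intro power_mono) auto
  then have "(3/4) * (U - 3/8 + 1/24) \<le> U\<^sup>2 / 2" by (simp add: power2_eq_square algebra_simps)
  moreover have "(3/4) * (1/8 - \<rho>) \<le> (3/4) * (U - 3/8 + 1/24)" using iN unfolding U_def by simp
  ultimately have poly: "(3/4) * (1/8 - \<rho>) \<le> U\<^sup>2 / 2" by linarith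
  have "(3/4) * (1/8 - \<rho>) * \<rho>^3 * N^3 = (\<rho>^3 * N^3) * ((3/4) * (1/8 - \<rho>))"
    by (simp only: ac_simps)
  also have "\<dots> \<le> (\<rho>^3 * N^3) * (U\<^sup>2 / 2)"
    using poly \<rho> N0 by (intro mult_left_mono) auto
  also have "\<dots> = (N * \<rho> / 2) * (\<rho> * (N * U))\<^sup>2"
    by (simp add: power2_eq_square power3_eq_cube)
  also have "\<dots> \<le> K * (K - (\<rho> + (N - 1) * \<rho>\<^sup>2))\<^sup>2"
  proof -
    have "0 \<le> \<rho> * (N * U)" "0 \<le> N * \<rho> / 2" using \<rho> N0 U by simp_all
    then show ?thesis using gap K by (intro mult_mono power_mono) auto
  qed
  finally show ?thesis .
qed

lemma offset_variance_ratio_le: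
  fixes N t s A :: real
  assumes N: "N > 0" and t: "t > 0" and s: "s\<^sup>2 = 2 * t\<^sup>2 * N^3" "4 * t\<^sup>2 * N \<le> s" and A: "A \<ge> 3 * s"
  shows "(2 * N^3 + 4 * N * A) / (A - s)\<^sup>2 \<le> 1 / t\<^sup>2"
proof -
  define x where "x = A - s"
  have s0: "s > 0" using s(2) N t by (meson mult_pos_pos zero_less_numeral zero_less_power order_less_le_trans)
  have x: "x \<ge> 2 * s" "x > 0" using A s0 t s unfolding x_def by auto
  have "t\<^sup>2 * (2 * N^3 + 4 * N * A) = s\<^sup>2 + (4 * t\<^sup>2 * N) * A"
    using s(1) by (simp add: algebra_simps)
  also have "\<dots> \<le> s\<^sup>2 + s * (s + x)"
    using s(2) A s0 unfolding x_def by (intro add_left_mono mult_right_mono) auto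
  also have "\<dots> \<le> x\<^sup>2"
  proof -
    have "(2 * s)\<^sup>2 \<le> x\<^sup>2" using x s0 by (intro power_mono) auto
    moreover have "s * x \<le> x * x / 2" using x by (simp add: field_simps mult_right_mono)
    ultimately show ?thesis by (simp add: power2_eq_square algebra_simps)
  qed
  finally show ?thesis
    using x t unfolding x_def[symmetric] by (simp add: field_simps)
qed

lemma powr_three_halves:
  fixes x :: real assumes "0 < x"
  shows "x powr (3/2) = sqrt x ^ 3"
proof -
  have "x powr (3/2) = (x powr (1/2)) powr 3" by (simp add: powr_powr)
  also have "\<dots> = sqrt x ^ 3"
    using assms powr_realpow[of "sqrt x" 3] by (simp add: powr_half_sqrt)
  finally show ?thesis .
qed

lemma power2_powr_three_halves:
  fixes x :: real assumes "0 < x"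
  shows "(x powr (3/2))\<^sup>2 = x ^ 3"
proof -
  have "(x powr (3/2))\<^sup>2 = x powr (3/2 + 3/2)"
    unfolding power2_eq_square powr_add ..
  also have "\<dots> = x ^ 3" using assms powr_realpow[of x 3] by simp
  finally show ?thesis .
qed

lemma power2_powr_neg_three_halves:
  fixes x :: real assumes "0 < x"
  shows "(x powr (-3/2))\<^sup>2 = 1 / x ^ 3"
proof -
  have "(x powr (-3/2))\<^sup>2 = x powr (-3/2 + -3/2)"
    unfolding power2_eq_square powr_add ..
  also have "\<dots> = 1 / x powr 3" by (simp add: powr_minus_divide)
  also have "\<dots> = 1 / x ^ 3" using assms powr_realpow[of x 3] by simp
  finally show ?thesis .
qed

lemma spike_count_small_deviation:
  assumes "0 < \<rho>" "\<rho> \<le> 1" "0 < t" "0 < n"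
  shows "measure (spike_law n \<rho>)
      {v \<in> space (spike_law n \<rho>). t * sqrt (\<rho> * real n) \<le> \<bar>(\<Sum>j<n. of_bool (v j)) - real n * \<rho>\<bar>}
    \<le> 1 / t\<^sup>2"
proof -
  have "0 < t * sqrt (\<rho> * real n)" using assms by simp
  note dev = spike_count_deviation[OF less_imp_le[OF assms(1)] assms(2) this, of n]
  have "(t * sqrt (\<rho> * real n))\<^sup>2 = t\<^sup>2 * (\<rho> * real n)"
    using assms by (simp add: power_mult_distrib)
  then have "real n * \<rho> * (1 - \<rho>) / (t * sqrt (\<rho> * real n))\<^sup>2 = (1 - \<rho>) / t\<^sup>2"
    using assms by simp
  also have "\<dots> \<le> 1 / t\<^sup>2"
    using assms by (intro divide_right_mono) auto
  finally have "real n * \<rho> * (1 - \<rho>) / (t * sqrt (\<rho> * real n))\<^sup>2 \<le> 1 / t\<^sup>2" .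
  with dev show ?thesis by linarith
qed

lemma null_law_offset_row_sum_stat_lower_tail:
  fixes a :: "nat \<Rightarrow> real"
  assumes "0 < n" "0 < t" and s: "s\<^sup>2 = 2 * t\<^sup>2 * real n ^ 3" "4 * t\<^sup>2 * real n \<le> s"
    and A: "(\<Sum>i<n. (a i)\<^sup>2) \<ge> 3 * s"
  shows "measure (null_law n) {Z \<in> space (null_law n). offset_row_sum_stat n a Z \<le> real n ^ 2 + s} \<le> 1 / t\<^sup>2"
proof -
  let ?A = "\<Sum>i<n. (a i)\<^sup>2"
  have "0 < 4 * t\<^sup>2 * real n" using assms by simp
  then have "real n ^ 2 + s < real n ^ 2 + ?A" using s(2) A by linarith
  then have "measure (null_law n) {Z \<in> space (null_law n). offset_row_sum_stat n a Z \<le> real n ^ 2 + s}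
      \<le> (2 * real n ^ 3 + 4 * real n * ?A) / (real n ^ 2 + ?A - (real n ^ 2 + s))\<^sup>2"
    by (rule null_law_offset_row_sum_stat_tails(1))
  also have "\<dots> = (2 * real n ^ 3 + 4 * real n * ?A) / (?A - s)\<^sup>2" by simp
  also have "\<dots> \<le> 1 / t\<^sup>2"
    using \<open>0 < n\<close> by (intro offset_variance_ratio_le[OF _ \<open>0 < t\<close> s A]) simp
  finally show ?thesis .
qed

lemma null_law_row_sum_stat_tail:
  assumes "0 < n" "0 < t" and s: "s\<^sup>2 = 2 * t\<^sup>2 * real n ^ 3" "0 < s"
  shows "measure (null_law n) {Y \<in> space (null_law n). row_sum_stat n Y < real n ^ 2 + s} \<ge> 1 - 1 / t\<^sup>2"
proof -
  have stat: "offset_row_sum_stat n (\<lambda>_. 0) = row_sum_stat n"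
    by (simp add: fun_eq_iff offset_row_sum_stat_def row_sum_stat_def)
  have "real n ^ 2 + (\<Sum>i<n. 0\<^sup>2) < real n ^ 2 + s" using s by simp
  note tail = null_law_offset_row_sum_stat_tails(2)[OF this]
  have "(2 * real n ^ 3 + 4 * real n * (\<Sum>i<n. 0\<^sup>2)) / (real n ^ 2 + s - (real n ^ 2 + (\<Sum>i<n. 0\<^sup>2)))\<^sup>2
      = 1 / t\<^sup>2"
    using assms by (simp add: s(1))
  then show ?thesis using tail unfolding stat by simp
qed

lemma planted_row_offset_energy_large:
  fixes n :: nat and \<rho> lam t s :: real and v :: "nat \<Rightarrow> bool"
  assumes n: "24 \<le> real n" and \<rho>: "0 < \<rho>" "\<rho> < 1/8" and t: "t \<le> sqrt (\<rho> * real n) / 2"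
    and lam: "4 * s \<le> lam\<^sup>2 * ((1/8 - \<rho>) * \<rho>^3 * real n ^ 3)"
    and v: "\<bar>(\<Sum>j<n. of_bool (v j)) - real n * \<rho>\<bar> < t * sqrt (\<rho> * real n)"
  shows "(\<Sum>i<n. (planted_row_offset n \<rho> lam v i)\<^sup>2) \<ge> 3 * s"
proof -
  define K where "K = (\<Sum>j<n. of_bool (v j) :: real)"
  have "t * sqrt (\<rho> * real n) \<le> sqrt (\<rho> * real n) / 2 * sqrt (\<rho> * real n)"
    using t \<rho> by (intro mult_right_mono) auto
  also have "\<dots> = real n * \<rho> / 2" using \<rho>(1) by (simp add: less_imp_le mult.commute)
  finally have K: "K \<ge> real n * \<rho> / 2" using v unfolding K_def abs_less_iff by (elim conjE) linarith
  have "lam\<^sup>2 * ((3/4) * (1/8 - \<rho>) * \<rho>^3 * real n ^ 3) = (3/4) * (lam\<^sup>2 * ((1/8 - \<rho>) * \<rho>^3 * real n ^ 3))"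
    by (simp only: mult_ac)
  then have "3 * s \<le> lam\<^sup>2 * ((3/4) * (1/8 - \<rho>) * \<rho>^3 * real n ^ 3)" using lam by linarith
  also have "\<dots> \<le> lam\<^sup>2 * (K * (K - (\<rho> + (real n - 1) * \<rho>\<^sup>2))\<^sup>2)"
    using support_energy_lower[OF n \<rho> K] by (intro mult_left_mono) auto
  also have "\<dots> = K * (lam * (K - (\<rho> + (real n - 1) * \<rho>\<^sup>2)))\<^sup>2"
    by (simp add: power_mult_distrib)
  also have "\<dots> \<le> (\<Sum>i<n. (planted_row_offset n \<rho> lam v i)\<^sup>2)"
    unfolding K_def using \<rho> by (intro planted_row_offset_energy) auto
  finally show ?thesis .
qed

lemma planted_law_row_sum_stat_tail:
  fixes n :: nat and \<rho> lam t s :: real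
  assumes n: "24 \<le> real n" and \<rho>: "0 < \<rho>" "\<rho> < 1/8" and t: "0 < t" "t \<le> sqrt (\<rho> * real n) / 2"
    and s: "s\<^sup>2 = 2 * t\<^sup>2 * real n ^ 3" "4 * t\<^sup>2 * real n \<le> s"
    and lam: "4 * s \<le> lam\<^sup>2 * ((1/8 - \<rho>) * \<rho>^3 * real n ^ 3)"
  shows "measure (planted_law n \<rho> lam) {Y \<in> space (planted_law n \<rho> lam). row_sum_stat n Y > real n ^ 2 + s}
    \<ge> 1 - 2 / t\<^sup>2"
proof -
  have n0: "0 < n" using n by simp
  define B where "B = {v \<in> space (spike_law n \<rho>).
    t * sqrt (\<rho> * real n) \<le> \<bar>(\<Sum>j<n. of_bool (v j)) - real n * \<rho>\<bar>}"
  have [measurable]: "(\<lambda>v. v j) \<in> measurable (spike_law n \<rho>) (count_space UNIV)" if "j < n" for j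
    using spike_law_coordinate_measurable[OF that] .
  have "B \<in> sets (spike_law n \<rho>)" unfolding B_def by measurable
  moreover have "measure (spike_law n \<rho>) B \<le> 1 / t\<^sup>2"
    unfolding B_def using \<rho> t n0 by (intro spike_count_small_deviation) auto
  moreover have "measure (null_law n) {Z \<in> space (null_law n).
      offset_row_sum_stat n (planted_row_offset n \<rho> lam v) Z \<le> real n ^ 2 + s} \<le> 1 / t\<^sup>2"
    if "v \<in> space (spike_law n \<rho>)" "v \<notin> B" for v
    using that n0 t s planted_row_offset_energy_large[OF n \<rho> t(2) lam, of v]
    by (intro null_law_offset_row_sum_stat_lower_tail) (auto simp: B_def not_le)
  ultimately show ?thesis
    using planted_law_upper_tail[of "1 / t\<^sup>2" B n \<rho> "1 / t\<^sup>2" lam "real n ^ 2 + s"] by simp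
qed

lemma lam_condition_sq:
  fixes n :: nat and \<rho> lam t :: real
  assumes "0 < n" "0 < \<rho>" "\<rho> < 1/8" "0 < t"
    and lam: "lam \<ge> sqrt (4 * sqrt 2 * t / (1/8 - \<rho>)) * (\<rho> * sqrt (real n)) powr (-3/2)"
  shows "4 * (t * sqrt 2 * real n powr (3/2)) \<le> lam\<^sup>2 * ((1/8 - \<rho>) * \<rho>^3 * real n ^ 3)"
proof -
  define C where "C = 4 * sqrt 2 * t / (1/8 - \<rho>)"
  define q where "q = \<rho> * sqrt (real n)"
  have C: "C > 0" and q: "q > 0" using assms by (simp_all add: C_def q_def)
  have "C / q ^ 3 = (sqrt C * q powr (-3/2))\<^sup>2"
    using C power2_powr_neg_three_halves[OF q] by (simp add: power_mult_distrib)
  also have "\<dots> \<le> lam\<^sup>2"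
    using lam C by (intro power_mono) (auto simp: C_def q_def)
  finally have "C \<le> lam\<^sup>2 * q ^ 3" using q by (simp add: divide_le_eq)
  then have "C * ((1/8 - \<rho>) * real n powr (3/2)) \<le> lam\<^sup>2 * q ^ 3 * ((1/8 - \<rho>) * real n powr (3/2))"
    using assms by (intro mult_right_mono) auto
  moreover have "C * ((1/8 - \<rho>) * real n powr (3/2)) = 4 * (t * sqrt 2 * real n powr (3/2))"
    using assms by (simp add: C_def)
  moreover have "lam\<^sup>2 * q ^ 3 * ((1/8 - \<rho>) * real n powr (3/2))
      = lam\<^sup>2 * ((1/8 - \<rho>) * \<rho>^3 * (real n powr (3/2))\<^sup>2)"
    using assms by (simp add: q_def power_mult_distrib powr_three_halves power2_eq_square)
  ultimately show ?thesis
    using assms by (simp add: power2_powr_three_halves)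
qed

lemma large_t_consequences:
  fixes n :: nat and \<rho> t :: real
  assumes "0 < \<rho>" "0 < t" "2 < t\<^sup>2" and t: "t \<le> (sqrt 2 / 18) * (1/8 - \<rho>) * sqrt (real n)"
  shows "24 \<le> real n" and "4 * t\<^sup>2 * real n \<le> t * sqrt 2 * real n powr (3/2)"
proof -
  have t144: "t \<le> sqrt 2 * sqrt (real n) / 144"
  proof -
    have "(sqrt 2 / 18) * (1/8 - \<rho>) * sqrt (real n) \<le> (sqrt 2 / 18) * (1/8) * sqrt (real n)"
      using \<open>0 < \<rho>\<close> by (intro mult_right_mono mult_left_mono) auto
    moreover have "(sqrt 2 / 18) * (1/8) * sqrt (real n) = sqrt 2 * sqrt (real n) / 144" by simp
    ultimately show ?thesis using t by linarith
  qed
  then have "t\<^sup>2 \<le> (sqrt 2 * sqrt (real n) / 144)\<^sup>2" using \<open>0 < t\<close> by (intro power_mono) auto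
  then have "2 < 2 * real n / 20736" using \<open>2 < t\<^sup>2\<close> by (simp add: power_mult_distrib power_divide)
  then show "24 \<le> real n" by simp
  moreover have "4 * t \<le> sqrt 2 * sqrt (real n)" using t144 \<open>0 < t\<close> by simp
  ultimately have "t * (4 * t * real n) \<le> t * (sqrt 2 * sqrt (real n) * real n)"
    using \<open>0 < t\<close> by (intro mult_left_mono mult_right_mono) auto
  also have "\<dots> = t * sqrt 2 * real n powr (3/2)"
    using \<open>24 \<le> real n\<close> by (simp add: powr_three_halves power3_eq_cube)
  finally show "4 * t\<^sup>2 * real n \<le> t * sqrt 2 * real n powr (3/2)"
    by (simp add: power2_eq_square mult.assoc)
qed

theorem mainTheorem16:
  fixes n :: nat and \<rho> lam t :: real
  assumes "1 / real n \<le> \<rho>" and "\<rho> < 1/8"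
    and "lam \<ge> 0"
    and "0 < t"
    and "t \<le> min ((1/2) * sqrt (\<rho> * real n)) ((sqrt 2 / 18) * (1/8 - \<rho>) * sqrt (real n))"
    and "lam \<ge> sqrt (4 * sqrt 2 * t / (1/8 - \<rho>)) * (\<rho> * sqrt (real n)) powr (-3/2)"
  shows "(measure (null_law n)
           {Y \<in> space (null_law n). row_sum_stat n Y < real n ^ 2 + t * sqrt 2 * real n powr (3/2)}
           \<ge> 1 - 1 / t^2) \<and>
         (measure (planted_law n \<rho> lam)
           {Y \<in> space (planted_law n \<rho> lam). row_sum_stat n Y > real n ^ 2 + t * sqrt 2 * real n powr (3/2)}
           \<ge> 1 - 2 / t^2)"
proof -
  have t1: "t \<le> sqrt (\<rho> * real n) / 2" and t2: "t \<le> (sqrt 2 / 18) * (1/8 - \<rho>) * sqrt (real n)"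
    using assms(5) by auto
  have "0 < sqrt (\<rho> * real n)" using \<open>0 < t\<close> t1 by linarith
  then have n: "0 < n" and \<rho>: "0 < \<rho>" by (auto simp: zero_less_mult_iff)
  define s where "s = t * sqrt 2 * real n powr (3/2)"
  have s: "s\<^sup>2 = 2 * t\<^sup>2 * real n ^ 3" "0 < s"
    using n \<open>0 < t\<close> by (simp_all add: s_def power_mult_distrib power2_powr_three_halves)
  have "measure (planted_law n \<rho> lam) {Y \<in> space (planted_law n \<rho> lam). row_sum_stat n Y > real n ^ 2 + s}
      \<ge> 1 - 2 / t\<^sup>2"
  proof (cases "t\<^sup>2 \<le> 2")
    case True
    then have "1 - 2 / t\<^sup>2 \<le> 0" using \<open>0 < t\<close> by (simp add: field_simps)
    then show ?thesis using measure_nonneg order_trans by blast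
  next
    case False
    then have "2 < t\<^sup>2" by simp
    note large = large_t_consequences[OF \<rho> \<open>0 < t\<close> this t2, folded s_def]
    show ?thesis
      using lam_condition_sq[OF n \<rho> \<open>\<rho> < 1/8\<close> \<open>0 < t\<close> assms(6), folded s_def]
      by (rule planted_law_row_sum_stat_tail[OF large(1) \<rho> \<open>\<rho> < 1/8\<close> \<open>0 < t\<close> t1 s(1) large(2)])
  qed
  then show ?thesis
    using null_law_row_sum_stat_tail[OF n \<open>0 < t\<close> s] unfolding s_def by simp
qed

end
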